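(* Let $c_1>0$, $c_2>0$ and $k\in\mathbb{R}\setminus\{0\}$, and consider the system on $\mathbb{R}^3$ $$\dot z_1=\frac1{c_2}z_2z_3,\qquad \dot z_2=-\frac1{c_1}z_1z_3,\qquad \dot z_3=-\frac{k}{c_1}z_1 ,$$ whose equilibrium states are $\widetilde e_0=(0,0,0)$, $\widetilde e_2^m=(0,m,0)$ and $\widetilde e_3^m=(0,0,m)$ for $m\in\mathbb{R}\setminus\{0\}$. Then: (i) $\widetilde e_0$ and $\widetilde e_3^m$ ($m\neq0$) are nonlinear stable; (ii) $\widetilde e_2^m$ ($m\neq0$) is nonlinear stable if $km>0$ and unstable if $km<0$.
   Context: Nonlinear stable means stable in the sense of Lyapunov: for every neighbourhood $U$ of the equilibrium there is a neighbourhood $V$ such that every trajectory starting in $V$ remains in $U$ for all $t\ge0$; unstable means not Lyapunov stable. *)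

theory Defs
  imports "HOL-Analysis.Analysis"
begin

definition trajectory :: "('a::real_normed_vector \<Rightarrow> 'a) \<Rightarrow> (real \<Rightarrow> 'a) \<Rightarrow> bool" where
  "trajectory f x \<longleftrightarrow>
     (\<forall>t\<ge>0. (x has_vector_derivative f (x t)) (at t within {0..}))"

definition lyapunov_stable :: "('a::real_normed_vector \<Rightarrow> 'a) \<Rightarrow> 'a \<Rightarrow> bool" where
  "lyapunov_stable f e \<longleftrightarrow>
     (\<forall>U. open U \<and> e \<in> U \<longrightarrow>
        (\<exists>V. open V \<and> e \<in> V \<and>
           (\<forall>x. trajectory f x \<and> x 0 \<in> V \<longrightarrow> (\<forall>t\<ge>0. x t \<in> U))))"

definition sys :: "real \<Rightarrow> real \<Rightarrow> real \<Rightarrow> real^3 \<Rightarrow> real^3" where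
  "sys c1 c2 k z = vector [ (1 / c2) * z$2 * z$3,
                            - (1 / c1) * z$1 * z$3,
                            - (k / c1) * z$1 ]"

end

theory Submission
  imports Defs
begin

(* The functions c2 z1^2 + c1 z2^2 and 2 k z2 - z3^2 are first integrals of the system.
   An equilibrium that is isolated in its common level set of these two integrals is Lyapunov
   stable: on a small sphere around it the integrals stay a positive distance away from their
   values at the equilibrium, so a trajectory starting close enough can never reach the sphere.
   This covers the origin, (0, 0, m), and (0, m, 0) when k m > 0.
   When k m < 0 the level set through (0, m, 0) contains the homoclinic loop
   (b sin theta cos theta, m cos (2 theta), A sin theta), traversed when theta' = a sin theta,
   i.e. theta = 2 arctan (u e^(a t)). For small u it starts arbitrarily close to (0, m, 0),
   yet at theta = pi/2 it passes through (0, -m, A), at distance at least 2 |m|. *)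

lemma trajectory_continuous_on: "trajectory f x \<Longrightarrow> continuous_on {0..} x"
  unfolding trajectory_def by (intro continuous_on_vector_derivative) auto

lemma conserved_along_trajectory:
  fixes H :: "'a::real_normed_vector \<Rightarrow> 'b::real_normed_vector"
  assumes H: "\<And>z. (H has_derivative H' z) (at z)"
    and tangent: "\<And>z. H' z (f z) = 0"
    and x: "trajectory f x" and t: "t \<ge> 0"
  shows "H (x t) = H (x 0)"
proof -
  have "((\<lambda>s. H (x s)) has_derivative (\<lambda>h. 0)) (at s within {0..})" if "s \<ge> 0" for s
  proof -
    have "(x has_derivative (\<lambda>h. h *\<^sub>R f (x s))) (at s within {0..})"
      using x that unfolding trajectory_def has_vector_derivative_def by simp
    then have "((\<lambda>s. H (x s)) has_derivative (\<lambda>h. H' (x s) (h *\<^sub>R f (x s)))) (at s within {0..})"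
      using H by (rule has_derivative_compose)
    moreover have "H' (x s) (h *\<^sub>R f (x s)) = 0" for h
      using linear.scaleR[OF has_derivative_linear[OF H]] tangent by simp
    ultimately show ?thesis by simp
  qed
  then obtain c where "\<forall>s\<in>{0..}. H (x s) = c"
    using has_derivative_zero_constant[of "{0::real..}" "\<lambda>s. H (x s)"] by auto
  then show ?thesis using t by simp
qed

lemma trajectory_stays_in_ball:
  assumes x: "trajectory f x" and x0: "dist (x 0) e < \<rho>"
    and avoids_sphere: "\<And>s. s \<ge> 0 \<Longrightarrow> dist (x s) e \<noteq> \<rho>" and t: "t \<ge> 0"
  shows "dist (x t) e < \<rho>"
proof (rule ccontr)
  assume "\<not> dist (x t) e < \<rho>"
  moreover have "continuous_on {0..t} (\<lambda>s. dist (x s) e)"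
    by (intro continuous_intros continuous_on_subset[OF trajectory_continuous_on[OF x]]) auto
  ultimately obtain s where "0 \<le> s" "dist (x s) e = \<rho>"
    using IVT'[of "\<lambda>s. dist (x s) e" 0 \<rho> t] x0 t by (meson less_eq_real_def not_less)
  then show False using avoids_sphere by blast
qed

lemma lyapunov_stable_if_isolated_in_level_set:
  fixes f :: "'a::euclidean_space \<Rightarrow> 'a" and \<Phi> :: "'a \<Rightarrow> 'b::real_normed_vector"
  assumes cont: "continuous_on UNIV \<Phi>"
    and conserved: "\<And>x t. trajectory f x \<Longrightarrow> t \<ge> 0 \<Longrightarrow> \<Phi> (x t) = \<Phi> (x 0)"
    and r: "r > 0"
    and isolated: "\<And>z. dist z e \<le> r \<Longrightarrow> \<Phi> z = \<Phi> e \<Longrightarrow> z = e"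
  shows "lyapunov_stable f e"
  unfolding lyapunov_stable_def
proof (intro allI impI, elim conjE)
  fix U :: "'a set" assume "open U" "e \<in> U"
  then obtain \<epsilon> where \<epsilon>: "\<epsilon> > 0" "ball e \<epsilon> \<subseteq> U" by (meson open_contains_ball)
  define \<rho> where "\<rho> = min r (\<epsilon>/2)"
  have \<rho>: "\<rho> > 0" "\<rho> \<le> r" "\<rho> < \<epsilon>" using r \<epsilon> by (auto simp: \<rho>_def)
  obtain \<mu> where \<mu>: "\<mu> > 0" "\<And>z. dist z e = \<rho> \<Longrightarrow> \<mu> \<le> dist (\<Phi> z) (\<Phi> e)"
  proof -
    have "sphere e \<rho> \<noteq> {}" using \<rho>(1) by simp
    moreover have "continuous_on (sphere e \<rho>) (\<lambda>z. dist (\<Phi> z) (\<Phi> e))"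
      by (intro continuous_intros continuous_on_subset[OF cont]) auto
    ultimately obtain z0 where "z0 \<in> sphere e \<rho>"
      "\<And>z. z \<in> sphere e \<rho> \<Longrightarrow> dist (\<Phi> z0) (\<Phi> e) \<le> dist (\<Phi> z) (\<Phi> e)"
      using continuous_attains_inf[OF compact_sphere] by blast
    then have z0: "dist e z0 = \<rho>"
      "\<And>z. dist e z = \<rho> \<Longrightarrow> dist (\<Phi> z0) (\<Phi> e) \<le> dist (\<Phi> z) (\<Phi> e)"
      by simp_all
    have "\<Phi> z0 \<noteq> \<Phi> e" using z0(1) \<rho> isolated[of z0] by (auto simp: dist_commute)
    then show ?thesis using that[of "dist (\<Phi> z0) (\<Phi> e)"] z0 by (simp add: dist_commute)
  qed
  obtain \<delta> where \<delta>: "\<delta> > 0" "\<And>z. dist z e < \<delta> \<Longrightarrow> dist (\<Phi> z) (\<Phi> e) < \<mu>"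
    using cont \<mu>(1) unfolding continuous_on_iff by (metis UNIV_I)
  show "\<exists>V. open V \<and> e \<in> V \<and> (\<forall>x. trajectory f x \<and> x 0 \<in> V \<longrightarrow> (\<forall>t\<ge>0. x t \<in> U))"
  proof (intro exI[of _ "ball e (min \<delta> \<rho>)"] conjI allI impI)
    fix x t assume "trajectory f x \<and> x 0 \<in> ball e (min \<delta> \<rho>)" and t: "(0::real) \<le> t"
    then have x: "trajectory f x" and x0: "dist (x 0) e < \<delta>" "dist (x 0) e < \<rho>"
      by (auto simp: dist_commute)
    have "dist (x s) e \<noteq> \<rho>" if "s \<ge> 0" for s
    proof
      assume "dist (x s) e = \<rho>"
      then have "\<mu> \<le> dist (\<Phi> (x s)) (\<Phi> e)" by (rule \<mu>(2))
      also have "\<dots> = dist (\<Phi> (x 0)) (\<Phi> e)" using conserved[OF x that] by simp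
      also have "\<dots> < \<mu>" using \<delta>(2)[OF x0(1)] .
      finally show False by simp
    qed
    then have "dist (x t) e < \<rho>" by (rule trajectory_stays_in_ball[OF x x0(2) _ t])
    then have "dist (x t) e < \<epsilon>" using \<rho>(3) by linarith
    then show "x t \<in> U" using \<epsilon>(2) by (simp add: subset_iff dist_commute)
  qed (use \<delta>(1) \<rho>(1) in simp_all)
qed

lemma not_lyapunov_stableI:
  assumes r: "r > 0"
    and escape: "\<And>\<delta>. \<delta> > 0 \<Longrightarrow>
      \<exists>x t. trajectory f x \<and> dist (x 0) e < \<delta> \<and> t \<ge> 0 \<and> r \<le> dist (x t) e"
  shows "\<not> lyapunov_stable f e"
proof
  assume "lyapunov_stable f e"
  then obtain V where V: "open V" "e \<in> V"
    "\<And>x t. trajectory f x \<Longrightarrow> x 0 \<in> V \<Longrightarrow> t \<ge> 0 \<Longrightarrow> x t \<in> ball e r"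
    using r unfolding lyapunov_stable_def by (metis centre_in_ball open_ball)
  then obtain \<delta> where "\<delta> > 0" "ball e \<delta> \<subseteq> V" by (meson open_contains_ball)
  with escape obtain x t where "trajectory f x" "x 0 \<in> V" "t \<ge> 0" "r \<le> dist (x t) e"
    by (metis dist_commute mem_ball subsetD)
  with V(3) show False by (fastforce simp: dist_commute)
qed

lemmas has_derivative_vec_nth [derivative_intros] =
  bounded_linear.has_derivative[OF bounded_linear_vec_nth]

definition sys_integrals :: "real \<Rightarrow> real \<Rightarrow> real \<Rightarrow> real^3 \<Rightarrow> real \<times> real" where
  "sys_integrals c1 c2 k z = (c2 * (z$1)^2 + c1 * (z$2)^2, 2 * k * z$2 - (z$3)^2)"

lemma has_derivative_sys_integrals:
  "(sys_integrals c1 c2 k has_derivative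
     (\<lambda>h. (2 * c2 * z$1 * h$1 + 2 * c1 * z$2 * h$2, 2 * k * h$2 - 2 * z$3 * h$3))) (at z)"
  unfolding sys_integrals_def[abs_def]
  by (rule derivative_eq_intros refl)+ (simp add: algebra_simps)

lemma continuous_on_sys_integrals: "continuous_on UNIV (sys_integrals c1 c2 k)"
  by (rule has_derivative_continuous_on[OF has_derivative_sys_integrals])

lemma sys_integrals_conserved:
  assumes "c1 \<noteq> 0" "c2 \<noteq> 0" and "trajectory (sys c1 c2 k) x" "t \<ge> 0"
  shows "sys_integrals c1 c2 k (x t) = sys_integrals c1 c2 k (x 0)"
  using has_derivative_sys_integrals _ assms(3,4)
  by (rule conserved_along_trajectory)
    (use assms(1,2) in \<open>simp add: sys_def zero_prod_def field_simps\<close>)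

lemma vector3_eq_iff: "(z::real^3) = vector [a, b, c] \<longleftrightarrow> z$1 = a \<and> z$2 = b \<and> z$3 = c"
  by (auto simp: vec_eq_iff forall_3)

lemma lyapunov_stable_sys_if_isolated_in_integral_level:
  assumes c: "c1 > 0" "c2 > 0" and r: "r > 0"
    and isolated: "\<And>z. dist z e \<le> r \<Longrightarrow>
      sys_integrals c1 c2 k z = sys_integrals c1 c2 k e \<Longrightarrow> z = e"
  shows "lyapunov_stable (sys c1 c2 k) e"
proof (rule lyapunov_stable_if_isolated_in_level_set[OF continuous_on_sys_integrals _ r isolated])
  show "sys_integrals c1 c2 k (x t) = sys_integrals c1 c2 k (x 0)"
    if "trajectory (sys c1 c2 k) x" "t \<ge> 0" for x t
    using c that by (intro sys_integrals_conserved) auto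
qed

lemma lyapunov_stable_sys_origin:
  assumes c: "c1 > 0" "c2 > 0"
  shows "lyapunov_stable (sys c1 c2 k) (vector [0, 0, 0])"
proof (rule lyapunov_stable_sys_if_isolated_in_integral_level[OF c zero_less_one])
  fix z :: "real^3"
  assume "sys_integrals c1 c2 k z = sys_integrals c1 c2 k (vector [0, 0, 0])"
  then have "c2 * (z$1)^2 + c1 * (z$2)^2 = 0" "2 * k * z$2 = (z$3)^2"
    by (simp_all add: sys_integrals_def)
  then show "z = vector [0, 0, 0]"
    using c by (simp add: vector3_eq_iff add_nonneg_eq_0_iff)
qed

lemma lyapunov_stable_sys_e3:
  assumes c: "c1 > 0" "c2 > 0" and m: "m \<noteq> 0"
  shows "lyapunov_stable (sys c1 c2 k) (vector [0, 0, m])"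
proof (rule lyapunov_stable_sys_if_isolated_in_integral_level[OF c])
  show "\<bar>m\<bar> > 0" using m by simp
  fix z :: "real^3"
  assume near: "dist z (vector [0, 0, m]) \<le> \<bar>m\<bar>"
    and "sys_integrals c1 c2 k z = sys_integrals c1 c2 k (vector [0, 0, m])"
  then have "c2 * (z$1)^2 + c1 * (z$2)^2 = 0" "(z$3)^2 = m^2 + 2 * k * z$2"
    by (simp_all add: sys_integrals_def algebra_simps)
  then have z12: "z$1 = 0" "z$2 = 0" and "(z$3)^2 = m^2"
    using c by (simp_all add: add_nonneg_eq_0_iff)
  then have "z$3 = m \<or> z$3 = -m" by (simp add: power2_eq_iff)
  moreover have "\<bar>z$3 - m\<bar> \<le> \<bar>m\<bar>"
    using near component_le_norm_cart[of "z - vector [0, 0, m]" 3] by (simp add: dist_norm)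
  ultimately have "z$3 = m" using m by auto
  then show "z = vector [0, 0, m]" using z12 by (simp add: vector3_eq_iff)
qed

lemma lyapunov_stable_sys_e2:
  assumes c: "c1 > 0" "c2 > 0" and km: "k * m > 0"
  shows "lyapunov_stable (sys c1 c2 k) (vector [0, m, 0])"
proof (rule lyapunov_stable_sys_if_isolated_in_integral_level[OF c zero_less_one])
  fix z :: "real^3"
  assume "sys_integrals c1 c2 k z = sys_integrals c1 c2 k (vector [0, m, 0])"
  then have C1: "c2 * (z$1)^2 + c1 * (z$2)^2 = c1 * m^2" and C2: "2 * k * (z$2 - m) = (z$3)^2"
    by (simp_all add: sys_integrals_def algebra_simps)
  have "c2 * (z$1)^2 \<ge> 0" using c by simp
  then have "c1 * (z$2)^2 \<le> c1 * m^2" using C1 by linarith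
  then have "\<bar>z$2\<bar> \<le> \<bar>m\<bar>" using c by (simp add: abs_le_square_iff)
  moreover have "k * (z$2 - m) \<ge> 0" using C2 zero_le_power2[of "z$3"] by linarith
  ultimately have "z$2 = m"
    using km by (cases "k > 0") (auto simp: zero_le_mult_iff zero_less_mult_iff)
  then show "z = vector [0, m, 0]"
    using C1 C2 c by (simp add: vector3_eq_iff)
qed

lemma vector3_eq_axis:
  "vector [x, y, z] = (x *\<^sub>R axis 1 1 + y *\<^sub>R axis 2 1 + z *\<^sub>R axis 3 1 :: real^3)"
  by (auto simp: vec_eq_iff forall_3 axis_def)

lemma has_vector_derivative_vector3:
  assumes "(f1 has_real_derivative d1) (at t within S)" "(f2 has_real_derivative d2) (at t within S)"
    and "(f3 has_real_derivative d3) (at t within S)"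
  shows "((\<lambda>t. vector [f1 t, f2 t, f3 t] :: real^3) has_vector_derivative vector [d1, d2, d3])
    (at t within S)"
  unfolding vector3_eq_axis by (rule derivative_eq_intros assms refl)+ simp

lemma continuous_vector3 [continuous_intros]:
  fixes f1 f2 f3 :: "'a::t2_space \<Rightarrow> real"
  assumes "continuous F f1" "continuous F f2" "continuous F f3"
  shows "continuous F (\<lambda>t. vector [f1 t, f2 t, f3 t] :: real^3)"
  unfolding vector3_eq_axis using assms by (intro continuous_intros)

definition homoclinic_orbit :: "real \<Rightarrow> real \<Rightarrow> real \<Rightarrow> real \<Rightarrow> real^3" where
  "homoclinic_orbit b m A \<phi> = vector [b * sin \<phi> * cos \<phi>, m * cos (2 * \<phi>), A * sin \<phi>]"

lemma sys_trajectory_homoclinic_orbit: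
  assumes c: "c1 \<noteq> 0" "c2 \<noteq> 0"
    and rel: "c2 * a * b = m * A" "b * A = 4 * c1 * a * m" "k * b = - c1 * a * A"
    and \<theta>: "\<And>t. (\<theta> has_real_derivative a * sin (\<theta> t)) (at t)"
  shows "trajectory (sys c1 c2 k) (\<lambda>t. homoclinic_orbit b m A (\<theta> t))"
  unfolding trajectory_def
proof (intro allI impI)
  fix t :: real
  define s where "s = sin (\<theta> t)"
  define c where "c = cos (\<theta> t)"
  have \<theta>': "(\<theta> has_real_derivative a * s) (at t)" using \<theta> by (simp add: s_def)
  have "((\<lambda>t. b * sin (\<theta> t) * cos (\<theta> t)) has_real_derivative b * (c^2 - s^2) * (a * s)) (at t)"
    by (rule derivative_eq_intros \<theta>' refl)+ (simp add: s_def c_def power2_eq_square algebra_simps)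
  moreover have "((\<lambda>t. m * cos (2 * \<theta> t)) has_real_derivative - 4 * m * s * c * (a * s)) (at t)"
    by (rule derivative_eq_intros \<theta>' refl)+ (simp add: s_def c_def sin_double)
  moreover have "((\<lambda>t. A * sin (\<theta> t)) has_real_derivative A * c * (a * s)) (at t)"
    by (rule derivative_eq_intros \<theta>' refl)+ (simp add: c_def)
  ultimately have "((\<lambda>t. homoclinic_orbit b m A (\<theta> t)) has_vector_derivative
      vector [b * (c^2 - s^2) * (a * s), - 4 * m * s * c * (a * s), A * c * (a * s)]) (at t)"
    unfolding homoclinic_orbit_def by (rule has_vector_derivative_vector3)
  also have "vector [b * (c^2 - s^2) * (a * s), - 4 * m * s * c * (a * s), A * c * (a * s)]
      = sys c1 c2 k (homoclinic_orbit b m A (\<theta> t))"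
  proof -
    have "b * (c^2 - s^2) * (a * s) = (1 / c2) * (m * (c^2 - s^2)) * (A * s)"
      using c rel(1) by (simp add: field_simps) algebra
    moreover have "- 4 * m * s * c * (a * s) = - (1 / c1) * (b * s * c) * (A * s)"
      using c rel(2) by (simp add: field_simps)
    moreover have "A * c * (a * s) = - (k / c1) * (b * s * c)"
      using c rel(3) by (simp add: field_simps) algebra
    ultimately show ?thesis
      by (simp add: sys_def homoclinic_orbit_def cos_double flip: s_def c_def)
  qed
  finally show "((\<lambda>t. homoclinic_orbit b m A (\<theta> t)) has_vector_derivative
      sys c1 c2 k (homoclinic_orbit b m A (\<theta> t))) (at t within {0..})"
    by (rule has_vector_derivative_at_within)
qed

lemma sin_double_arctan: "sin (2 * arctan w) = 2 * w / (1 + w^2)"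
proof -
  have "sqrt (1 + w^2) ^ 2 = 1 + w^2" by (simp add: add_pos_nonneg)
  then show ?thesis
    by (simp add: sin_double sin_arctan cos_arctan power2_eq_square)
qed

lemma double_arctan_exp_solves:
  "((\<lambda>t. 2 * arctan (u * exp (a * t))) has_real_derivative
     a * sin (2 * arctan (u * exp (a * t)))) (at t)"
  unfolding sin_double_arctan
  by (rule derivative_eq_intros refl)+ (simp add: field_simps power2_eq_square)

lemma not_lyapunov_stable_sys_e2:
  assumes c: "c1 > 0" "c2 > 0" and km: "k * m < 0"
  shows "\<not> lyapunov_stable (sys c1 c2 k) (vector [0, m, 0])"
proof (rule not_lyapunov_stableI)
  have k: "k \<noteq> 0" and m: "m \<noteq> 0" using km by auto
  define a where "a = sqrt (- k * m / (c1 * c2))"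
  define A where "A = 2 * sqrt (- k * m)"
  define b where "b = - c1 * a * A / k"
  have "- k * m / (c1 * c2) > 0" using km c by (simp add: divide_neg_pos)
  then have a: "a > 0" "a^2 * (c1 * c2) = - k * m" using c by (simp_all add: a_def)
  have A: "A^2 = - 4 * k * m" using km by (simp add: A_def power_mult_distrib)
  have "c2 * a * b = - (a^2 * (c1 * c2)) * A / k" by (simp add: b_def power2_eq_square)
  then have rel1: "c2 * a * b = m * A" using a(2) k by simp
  have "b * A = - c1 * a * A^2 / k" by (simp add: b_def power2_eq_square)
  then have rel2: "b * A = 4 * c1 * a * m" using A k by simp
  have rel3: "k * b = - c1 * a * A" using k by (simp add: b_def)
  let ?e = "vector [0, m, 0] :: real^3"
  let ?\<gamma> = "\<lambda>u. homoclinic_orbit b m A (2 * arctan u)"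
  show "2 * \<bar>m\<bar> > 0" using m by simp
  fix \<delta> :: real assume "\<delta> > 0"
  have "continuous (at 0) ?\<gamma>" unfolding homoclinic_orbit_def by (intro continuous_intros)
  moreover have "?\<gamma> 0 = ?e" by (simp add: homoclinic_orbit_def)
  ultimately obtain \<eta> where \<eta>: "\<eta> > 0" "\<And>u. dist u 0 < \<eta> \<Longrightarrow> dist (?\<gamma> u) ?e < \<delta>"
    using \<open>\<delta> > 0\<close> unfolding continuous_at_eps_delta by metis
  define u where "u = min (\<eta> / 2) (1 / 2)"
  have u: "0 < u" "u < 1" "u < \<eta>" using \<eta>(1) by (auto simp: u_def)
  define x where "x t = ?\<gamma> (u * exp (a * t))" for t
  have "trajectory (sys c1 c2 k) x"
    unfolding x_def using c
    by (intro sys_trajectory_homoclinic_orbit[OF _ _ rel1 rel2 rel3 double_arctan_exp_solves]) simp_all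
  moreover have "dist (x 0) ?e < \<delta>" using \<eta>(2) u by (simp add: x_def)
  moreover define T where "T = - ln u / a"
  moreover have "T \<ge> 0" using u a(1) by (simp add: T_def divide_nonpos_pos)
  moreover have "2 * \<bar>m\<bar> \<le> dist (x T) ?e"
  proof -
    have "u * exp (a * T) = 1" using u a(1) by (simp add: T_def exp_minus)
    then have "x T = vector [0, - m, A]"
      by (simp add: x_def homoclinic_orbit_def)
    then have "(x T - ?e) $ 2 = - 2 * m" by simp
    then show ?thesis
      using component_le_norm_cart[of "x T - ?e" 2] by (simp add: dist_norm abs_mult)
  qed
  ultimately show "\<exists>x t. trajectory (sys c1 c2 k) x \<and> dist (x 0) ?e < \<delta> \<and> t \<ge> 0
      \<and> 2 * \<bar>m\<bar> \<le> dist (x t) ?e"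
    by blast
qed

theorem proposition5p5:
  fixes c1 c2 k :: real
  assumes "c1 > 0" and "c2 > 0" and "k \<noteq> 0"
  shows "lyapunov_stable (sys c1 c2 k) (vector [0, 0, 0])
       \<and> (\<forall>m::real. m \<noteq> 0 \<longrightarrow> lyapunov_stable (sys c1 c2 k) (vector [0, 0, m]))
       \<and> (\<forall>m::real. m \<noteq> 0 \<and> k * m > 0 \<longrightarrow> lyapunov_stable (sys c1 c2 k) (vector [0, m, 0]))
       \<and> (\<forall>m::real. m \<noteq> 0 \<and> k * m < 0 \<longrightarrow> \<not> lyapunov_stable (sys c1 c2 k) (vector [0, m, 0]))"
  using lyapunov_stable_sys_origin[OF assms(1,2)] lyapunov_stable_sys_e3[OF assms(1,2)]
    lyapunov_stable_sys_e2[OF assms(1,2)] not_lyapunov_stable_sys_e2[OF assms(1,2)]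
  by blast

end
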